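(* Let $\mathcal G=(G_n)_{n\in\mathbb N}=((V_n,E_n))_{n\in\mathbb N}$ be an expander sequence. Let $\varepsilon>0$ and let $(\tilde G_n)$ be such that each $\tilde G_n$ is obtained from $G_n$ by deleting edges such that each vertex keeps at least a $(1/2+\varepsilon)$ fraction of its edges. Let $A_n\subseteq V_n$ with $|A_n|=o(n)$. (a) There is $B_n\subseteq A_n$ with $|B_n|=(1-o(1))|A_n|$ such that for all $u\in B_n$, $\frac{|N_{\tilde G_n}(u)\cap A_n|}{|N_{\tilde G_n}(u)|}=o(1)$. (b) There is $B_n\subseteq V_n\setminus A_n$ with $|V_n\setminus(A_n\cup B_n)|=o(|A_n|)$ such that for all $v\in B_n$, $\frac{|N_{\tilde G_n}(v)\cap A_n|}{|N_{\tilde G_n}(v)|}=o(1)$.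
   Context: An expander sequence is a sequence $(G_n)$ of connected graphs, $G_n$ on $n$ vertices with minimum degree $\delta_n$, maximum degree $\Delta_n$, and $\lambda_n=\max\{|\mu_2|,|\mu_n|\}$ (adjacency eigenvalues $\mu_1\ge\dots\ge\mu_n$), such that $\Delta_n/\delta_n=1+o(1)$ and $\lambda_n=o(\Delta_n)$. "Keeps at least a $(1/2+\varepsilon)$ fraction" means $d_{\tilde G_n}(v)\ge(1/2+\varepsilon)d_{G_n}(v)$. $N_{\tilde G_n}(u)$ is the neighbourhood of $u$ in $\tilde G_n$. Asymptotic notation is as $n\to\infty$; the $o(1)$ bounds on the ratios hold uniformly over the vertices of $B_n$. *)

theory Defs
  imports "Jordan_Normal_Form.Char_Poly" "HOL-Library.Landau_Symbols" "HOL-Library.Multiset"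
begin

definition is_graph :: "nat \<Rightarrow> (nat \<Rightarrow> nat \<Rightarrow> bool) \<Rightarrow> bool" where
  "is_graph n E \<longleftrightarrow> (\<forall>u v. E u v \<longrightarrow> u < n \<and> v < n \<and> u \<noteq> v \<and> E v u)"

definition connected_graph :: "nat \<Rightarrow> (nat \<Rightarrow> nat \<Rightarrow> bool) \<Rightarrow> bool" where
  "connected_graph n E \<longleftrightarrow> (\<forall>u<n. \<forall>v<n. E\<^sup>*\<^sup>* u v)"

definition nbhd :: "nat \<Rightarrow> (nat \<Rightarrow> nat \<Rightarrow> bool) \<Rightarrow> nat \<Rightarrow> nat set" where
  "nbhd n E v = {u. u < n \<and> E v u}"

definition deg :: "nat \<Rightarrow> (nat \<Rightarrow> nat \<Rightarrow> bool) \<Rightarrow> nat \<Rightarrow> nat" where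
  "deg n E v = card (nbhd n E v)"

definition min_deg :: "nat \<Rightarrow> (nat \<Rightarrow> nat \<Rightarrow> bool) \<Rightarrow> nat" where
  "min_deg n E = Min (deg n E ` {..<n})"

definition max_deg :: "nat \<Rightarrow> (nat \<Rightarrow> nat \<Rightarrow> bool) \<Rightarrow> nat" where
  "max_deg n E = Max (deg n E ` {..<n})"

definition adj_mat :: "nat \<Rightarrow> (nat \<Rightarrow> nat \<Rightarrow> bool) \<Rightarrow> real mat" where
  "adj_mat n E = mat n n (\<lambda>(i, j). if E i j then 1 else 0)"

text \<open>Adjacency eigenvalues (with multiplicity) in non-increasing order mu_1 >= ... >= mu_n;
  list index k-1 holds mu_k.  (A real symmetric matrix has only real eigenvalues.)\<close>
definition adj_eigs :: "nat \<Rightarrow> (nat \<Rightarrow> nat \<Rightarrow> bool) \<Rightarrow> real list" where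
  "adj_eigs n E = rev (sorted_list_of_multiset (proots (char_poly (adj_mat n E))))"

definition spec_lambda :: "nat \<Rightarrow> (nat \<Rightarrow> nat \<Rightarrow> bool) \<Rightarrow> real" where
  "spec_lambda n E = max \<bar>adj_eigs n E ! 1\<bar> \<bar>adj_eigs n E ! (n - 1)\<bar>"

definition expander_sequence :: "(nat \<Rightarrow> nat \<Rightarrow> nat \<Rightarrow> bool) \<Rightarrow> bool" where
  "expander_sequence G \<longleftrightarrow>
     (\<forall>n. is_graph n (G n) \<and> connected_graph n (G n)) \<and>
     ((\<lambda>n. real (max_deg n (G n)) / real (min_deg n (G n))) \<longlonglongrightarrow> 1) \<and>
     (\<lambda>n. spec_lambda n (G n)) \<in> o(\<lambda>n. real (max_deg n (G n)))"

end

(*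
  Let v be a unit eigenvector for the top adjacency eigenvalue mu of G and let lambda bound the other
  eigenvalues in absolute value.  Expanding in an orthonormal eigenbasis gives the mixing bound
  |x.My - mu (x.v)(y.v)| <= lambda |x| |y|.  Taking x = y = 1 shows that v is close to constant:
  |v - mean v|^2 <= theta = 1 - (delta - lambda)/Delta, so 1_T.v <= |T|/sqrt n + sqrt (|T| theta) and the
  number of edges between S and A is at most Delta (|S||A|/n + kappa sqrt (|S||A|)) with
  kappa = 2 sqrt theta + theta + lambda/Delta, which tends to 0 along an expander sequence.
  If every vertex of S has more than eta Delta neighbours in A, where eta >= 2|A|/n and eta^2 >= kappa,
  this forces |S| <= 4 kappa |A| = o(|A|).  Every other vertex has at most eta Delta neighbours in A but
  keeps at least delta/2 neighbours in the subgraph, so its ratio is at most 2 eta Delta/delta -> 0.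
*)
theory Submission
  imports Defs "HOL-Analysis.L2_Norm" "HOL-Library.Indicator_Function"
begin

section \<open>Vectors and matrices as functions\<close>

(* An n-vector is a function nat => real and an n x n matrix a function nat => nat => real; only
   arguments below n matter.  A family of vectors V is indexed as V k i, coordinate i of vector k. *)

definition matvec :: "nat \<Rightarrow> (nat \<Rightarrow> nat \<Rightarrow> real) \<Rightarrow> (nat \<Rightarrow> real) \<Rightarrow> nat \<Rightarrow> real" where
  "matvec n M x = (\<lambda>i. \<Sum>j<n. M i j * x j)"

definition matmul :: "nat \<Rightarrow> (nat \<Rightarrow> nat \<Rightarrow> real) \<Rightarrow> (nat \<Rightarrow> nat \<Rightarrow> real) \<Rightarrow> nat \<Rightarrow> nat \<Rightarrow> real" where
  "matmul n A B = (\<lambda>i j. \<Sum>k<n. A i k * B k j)"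

definition dot :: "nat \<Rightarrow> (nat \<Rightarrow> real) \<Rightarrow> (nat \<Rightarrow> real) \<Rightarrow> real" where
  "dot n x y = (\<Sum>i<n. x i * y i)"

definition symmetric_mat :: "nat \<Rightarrow> (nat \<Rightarrow> nat \<Rightarrow> real) \<Rightarrow> bool" where
  "symmetric_mat n M \<longleftrightarrow> (\<forall>i<n. \<forall>j<n. M i j = M j i)"

definition kdelta :: "nat \<Rightarrow> nat \<Rightarrow> real" where
  "kdelta i j = (if i = j then 1 else 0)"

definition orthonormal :: "nat \<Rightarrow> (nat \<Rightarrow> nat \<Rightarrow> real) \<Rightarrow> bool" where
  "orthonormal n V \<longleftrightarrow> (\<forall>k<n. \<forall>l<n. dot n (V k) (V l) = kdelta k l)"

definition eigenbasis ::
    "nat \<Rightarrow> (nat \<Rightarrow> nat \<Rightarrow> real) \<Rightarrow> (nat \<Rightarrow> nat \<Rightarrow> real) \<Rightarrow> (nat \<Rightarrow> real) \<Rightarrow> bool" where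
  "eigenbasis n M V e \<longleftrightarrow> orthonormal n V \<and> (\<forall>k<n. \<forall>i<n. matvec n M (V k) i = e k * V k i)"

lemma kdelta_commute: "kdelta i j = kdelta j i"
  unfolding kdelta_def by auto

lemma sum_kdelta [simp]:
  assumes "j < (m::nat)"
  shows "(\<Sum>k<m. kdelta j k * f k) = f j" "(\<Sum>k<m. kdelta k j * f k) = f j"
    "(\<Sum>k<m. f k * kdelta j k) = f j" "(\<Sum>k<m. f k * kdelta k j) = f j"
proof -
  have "kdelta j k * f k = (if k = j then f k else 0)" "kdelta k j * f k = (if k = j then f k else 0)"
    "f k * kdelta j k = (if k = j then f k else 0)" "f k * kdelta k j = (if k = j then f k else 0)" for k
    by (auto simp: kdelta_def)
  with assms show "(\<Sum>k<m. kdelta j k * f k) = f j" "(\<Sum>k<m. kdelta k j * f k) = f j"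
    "(\<Sum>k<m. f k * kdelta j k) = f j" "(\<Sum>k<m. f k * kdelta k j) = f j"
    by (simp_all add: sum.delta)
qed

lemma matvec_cong: "(\<And>j. j < n \<Longrightarrow> x j = y j) \<Longrightarrow> matvec n M x = matvec n M y"
  unfolding matvec_def by (intro ext sum.cong) auto

lemma dot_cong: "(\<And>j. j < n \<Longrightarrow> y j = z j) \<Longrightarrow> dot n x y = dot n x z"
  unfolding dot_def by (intro sum.cong) auto

lemma dot_commute: "dot n x y = dot n y x"
  unfolding dot_def by (simp add: mult.commute)

lemma dot_self_pos: "i < n \<Longrightarrow> x i \<noteq> 0 \<Longrightarrow> dot n x x > 0"
  unfolding dot_def by (intro sum_pos2[of _ i]) (auto simp flip: power2_eq_square)

lemma dot_self_eq_0D: "dot n x x = 0 \<Longrightarrow> i < n \<Longrightarrow> x i = 0"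
  using dot_self_pos[of i n x] by fastforce

lemma matvec_matmul: "matvec n (matmul n A B) x = matvec n A (matvec n B x)"
proof
  fix i
  have "(\<Sum>j<n. (\<Sum>k<n. A i k * B k j) * x j) = (\<Sum>k<n. \<Sum>j<n. A i k * (B k j * x j))"
    by (subst sum.swap) (simp add: sum_distrib_right mult.assoc)
  then show "matvec n (matmul n A B) x i = matvec n A (matvec n B x) i"
    unfolding matvec_def matmul_def by (simp add: sum_distrib_left)
qed

lemma dot_matvec_symmetric:
  assumes "symmetric_mat n A"
  shows "dot n (matvec n A x) y = dot n x (matvec n A y)"
proof -
  have "dot n (matvec n A x) y = (\<Sum>i<n. \<Sum>j<n. A i j * x j * y i)"
    unfolding dot_def matvec_def by (simp add: sum_distrib_right)
  also have "\<dots> = (\<Sum>j<n. \<Sum>i<n. x j * (A j i * y i))"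
    using assms unfolding symmetric_mat_def by (subst sum.swap) (auto intro!: sum.cong simp: mult_ac)
  also have "\<dots> = dot n x (matvec n A y)"
    unfolding dot_def matvec_def by (simp add: sum_distrib_left)
  finally show ?thesis .
qed

lemma matvec_involution:
  assumes "\<forall>i<m. \<forall>j<m. matmul m H H i j = kdelta i j" "i < m"
  shows "matvec m H (matvec m H z) i = z i"
proof -
  have "matvec m H (matvec m H z) i = matvec m (matmul m H H) z i"
    by (simp add: matvec_matmul)
  also have "\<dots> = (\<Sum>j<m. kdelta i j * z j)"
    unfolding matvec_def using assms by (intro sum.cong) auto
  also have "\<dots> = z i"
    using assms(2) by simp
  finally show ?thesis .
qed

section \<open>The spectral theorem for real symmetric matrices\<close>

lemma symmetric_eigenvalue_real:
  fixes w :: "nat \<Rightarrow> complex"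
  assumes S: "symmetric_mat n A" and i0: "i0 < n" "w i0 \<noteq> 0"
    and eig: "\<And>i. i < n \<Longrightarrow> (\<Sum>j<n. of_real (A i j) * w j) = c * w i"
  shows "Im c = 0"
proof -
  define Q where "Q = (\<Sum>i<n. \<Sum>j<n. cnj (w i) * of_real (A i j) * w j)"
  define N where "N = (\<Sum>i<n. (cmod (w i))\<^sup>2)"
  have "Q = (\<Sum>i<n. c * (cnj (w i) * w i))"
    unfolding Q_def using eig
    by (intro sum.cong) (auto simp: sum_distrib_left[symmetric] mult.assoc mult.left_commute)
  also have "\<dots> = c * of_real N"
  proof -
    have "cnj (w i) * w i = of_real ((cmod (w i))\<^sup>2)" for i
      by (metis complex_norm_square mult.commute)
    then show ?thesis
      unfolding N_def of_real_sum sum_distrib_left by (simp only:)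
  qed
  finally have QN: "Q = c * of_real N" .
  have "cnj Q = (\<Sum>j<n. \<Sum>i<n. cnj (w j) * of_real (A j i) * w i)"
    unfolding Q_def using S unfolding symmetric_mat_def
    by (subst sum.swap) (auto intro!: sum.cong simp: mult_ac)
  then have "cnj Q = Q"
    unfolding Q_def .
  moreover have "Im (cnj Q) = - Im Q"
    by simp
  ultimately have "Im Q = 0"
    by simp
  then have "Im c * N = 0"
    using QN by simp
  moreover have "N > 0"
    unfolding N_def using i0 by (intro sum_pos2[of _ i0]) auto
  ultimately show ?thesis by simp
qed

lemma complex_eigenvector_exists:
  fixes A :: "nat \<Rightarrow> nat \<Rightarrow> real"
  assumes n: "n > 0"
  obtains c :: complex and w where "\<exists>i<n. w i \<noteq> 0"
    "\<And>i. i < n \<Longrightarrow> (\<Sum>j<n. of_real (A i j) * w j) = c * w i"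
proof -
  define Ac where "Ac = mat n n (\<lambda>(i, j). complex_of_real (A i j))"
  have Ac: "Ac \<in> carrier_mat n n"
    unfolding Ac_def by simp
  obtain cs where cp: "char_poly Ac = (\<Prod>a\<leftarrow>cs. [:- a, 1:])" and "length cs = n"
    using char_poly_factorized[OF Ac] by blast
  with n obtain c cs' where "cs = c # cs'"
    by (cases cs) auto
  with cp have "eigenvalue Ac c"
    using eigenvalue_root_char_poly[OF Ac] by simp
  then obtain w where w: "w \<in> carrier_vec n" "w \<noteq> 0\<^sub>v n" "Ac *\<^sub>v w = c \<cdot>\<^sub>v w"
    unfolding eigenvalue_def eigenvector_def using Ac by auto
  have "\<exists>i<n. w $ i \<noteq> 0"
  proof (rule ccontr)
    assume "\<not> (\<exists>i<n. w $ i \<noteq> 0)"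
    then have "w = 0\<^sub>v n"
      using w(1) by (intro eq_vecI) auto
    with w(2) show False ..
  qed
  moreover have "(\<Sum>j<n. complex_of_real (A i j) * w $ j) = c * w $ i" if "i < n" for i
  proof -
    have "(Ac *\<^sub>v w) $ i = (\<Sum>j<n. complex_of_real (A i j) * w $ j)"
      using that w(1) unfolding Ac_def by (simp add: scalar_prod_def lessThan_atLeast0)
    with w(3) that w(1) show ?thesis
      by simp
  qed
  ultimately show ?thesis
    using that[of "\<lambda>j. w $ j"] by blast
qed

lemma symmetric_real_eigenvector:
  assumes n: "n > 0" and S: "symmetric_mat n A"
  obtains x r where "\<exists>i<n. x i \<noteq> 0" "\<And>i. i < n \<Longrightarrow> matvec n A x i = r * x i"
proof -
  obtain c :: complex and w where "\<exists>i<n. w i \<noteq> 0"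
    and eig: "\<And>i. i < n \<Longrightarrow> (\<Sum>j<n. of_real (A i j) * w j) = c * w i"
    using complex_eigenvector_exists[OF n] by metis
  then obtain i0 where i0: "i0 < n" "w i0 \<noteq> 0"
    by blast
  have "Im c = 0"
    using symmetric_eigenvalue_real[OF S i0 eig] .
  then have "of_real (Re c) = c"
    by (simp add: complex_eq_iff)
  then have re: "matvec n A (\<lambda>j. Re (w j)) i = Re c * Re (w i)"
    and im: "matvec n A (\<lambda>j. Im (w j)) i = Re c * Im (w i)" if "i < n" for i
    using arg_cong[OF eig[OF that], of Re] arg_cong[OF eig[OF that], of Im] \<open>Im c = 0\<close>
    by (simp_all add: matvec_def)
  have "Re (w i0) \<noteq> 0 \<or> Im (w i0) \<noteq> 0"
    using i0(2) complex_eqI by force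
  then show ?thesis
  proof
    assume "Re (w i0) \<noteq> 0"
    with i0(1) re show ?thesis
      by (intro that[of "\<lambda>j. Re (w j)" "Re c"]) auto
  next
    assume "Im (w i0) \<noteq> 0"
    with i0(1) im show ?thesis
      by (intro that[of "\<lambda>j. Im (w j)" "Re c"]) auto
  qed
qed

lemma symmetric_unit_eigenvector:
  assumes "n > 0" "symmetric_mat n A"
  obtains r u where "dot n u u = 1" "\<And>i. i < n \<Longrightarrow> matvec n A u i = r * u i"
proof -
  obtain x r where "\<exists>i<n. x i \<noteq> 0" and eig: "\<And>i. i < n \<Longrightarrow> matvec n A x i = r * x i"
    using symmetric_real_eigenvector[OF assms] by metis
  then obtain i where x: "i < n" "x i \<noteq> 0"
    by blast
  define u where "u = (\<lambda>i. x i / sqrt (dot n x x))"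
  have pos: "dot n x x > 0"
    using dot_self_pos[of i n x, OF x] .
  have "dot n u u = dot n x x / (sqrt (dot n x x))\<^sup>2"
    unfolding u_def dot_def by (simp add: sum_divide_distrib power2_eq_square)
  then have "dot n u u = 1"
    using pos by simp
  moreover have "matvec n A u i = r * u i" if "i < n" for i
  proof -
    have "matvec n A u i = matvec n A x i / sqrt (dot n x x)"
      unfolding u_def matvec_def by (simp add: sum_divide_distrib)
    with eig[OF that] show ?thesis
      unfolding u_def by simp
  qed
  ultimately show ?thesis
    using that by blast
qed

lemma reflection_involution:
  assumes c: "c * c * dot m w w = 2 * c" and "i < m" "j < m"
  defines "H \<equiv> \<lambda>i j. kdelta i j - c * w i * w j"
  shows "matmul m H H i j = kdelta i j"
proof -
  have "matmul m H H i j = (\<Sum>l<m. kdelta i l * kdelta l j) - (\<Sum>l<m. kdelta i l * (c * w l * w j))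
      - (\<Sum>l<m. (c * w i * w l) * kdelta l j) + (\<Sum>l<m. c * c * w i * w j * (w l * w l))"
    unfolding matmul_def H_def by (simp add: algebra_simps sum.distrib sum_subtractf)
  also have "(\<Sum>l<m. c * c * w i * w j * (w l * w l)) = (c * c * dot m w w) * (w i * w j)"
    unfolding dot_def sum_distrib_left sum_distrib_right by (intro sum.cong) (simp_all add: mult_ac)
  also have "(\<Sum>l<m. (c * w i * w l) * kdelta l j) = c * w i * w j"
    using assms(3) by simp
  also have "(\<Sum>l<m. kdelta i l * (c * w l * w j)) = c * w i * w j"
    using assms(2) by simp
  also have "(\<Sum>l<m. kdelta i l * kdelta l j) = kdelta i j"
    using assms(2) by simp
  also have "(c * c * dot m w w) * (w i * w j) = 2 * (c * w i * w j)"
    unfolding c by (simp only: mult.assoc)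
  finally show ?thesis
    by linarith
qed

lemma householder_reflection:
  assumes u: "dot m u u = 1" and k: "k < m"
  obtains H where "symmetric_mat m H" "\<forall>i<m. \<forall>j<m. matmul m H H i j = kdelta i j"
    "\<forall>i<m. H i k = u i"
proof -
  define w where "w i = u i - kdelta i k" for i
  define c where "c = (if dot m w w = 0 then 0 else 2 / dot m w w)"
  define H where "H i j = kdelta i j - c * w i * w j" for i j
  have "dot m w w = dot m u u - 2 * (\<Sum>i<m. u i * kdelta i k) + (\<Sum>i<m. kdelta i k * kdelta i k)"
    unfolding dot_def w_def by (simp add: algebra_simps sum.distrib sum_subtractf sum_distrib_left)
  then have ww: "dot m w w = 2 - 2 * u k"
    using u k by (simp, simp add: kdelta_def)
  have "symmetric_mat m H"
    unfolding symmetric_mat_def H_def by (simp add: kdelta_commute mult_ac)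
  moreover have "c * c * dot m w w = 2 * c"
    unfolding c_def by simp
  then have "\<forall>i<m. \<forall>j<m. matmul m H H i j = kdelta i j"
    unfolding H_def[abs_def] by (blast intro: reflection_involution)
  moreover have "H i k = u i" if "i < m" for i
  proof (cases "dot m w w = 0")
    case True
    then have "w i = 0"
      using dot_self_eq_0D that by blast
    with True show ?thesis
      unfolding H_def c_def w_def by simp
  next
    case False
    have "w k = - dot m w w / 2"
      unfolding ww by (simp add: w_def kdelta_def)
    with False have "c * w k = -1"
      unfolding c_def by simp
    have "H i k = kdelta i k - (c * w k) * w i"
      unfolding H_def by (simp add: mult_ac)
    also have "\<dots> = kdelta i k + w i"
      using \<open>c * w k = -1\<close> by simp
    finally have "H i k = kdelta i k + w i" .
    then show ?thesis
      unfolding w_def by simp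
  qed
  ultimately show ?thesis
    using that by blast
qed

lemma symmetric_mat_conjugate:
  assumes H: "symmetric_mat m H" and A: "symmetric_mat m A"
  shows "symmetric_mat m (matmul m H (matmul m A H))"
proof -
  have entry: "matmul m H (matmul m A H) i j = dot m (\<lambda>l. H l i) (matvec m A (\<lambda>l. H l j))"
    if "i < m" for i j
    unfolding matmul_def dot_def matvec_def using H that unfolding symmetric_mat_def
    by (intro sum.cong) auto
  show ?thesis
    unfolding symmetric_mat_def
  proof safe
    fix i j assume "i < m" "j < m"
    have "dot m (\<lambda>l. H l i) (matvec m A (\<lambda>l. H l j)) = dot m (\<lambda>l. H l j) (matvec m A (\<lambda>l. H l i))"
      by (simp only: dot_matvec_symmetric[OF A, symmetric] dot_commute[of m "\<lambda>l. H l j"])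
    then show "matmul m H (matmul m A H) i j = matmul m H (matmul m A H) j i"
      using entry \<open>i < m\<close> \<open>j < m\<close> by simp
  qed
qed

lemma matmul_conjugate_column:
  assumes HH: "\<forall>i<m. \<forall>j<m. matmul m H H i j = kdelta i j" and Hk: "\<forall>i<m. H i k = u i"
    and eig: "\<And>i. i < m \<Longrightarrow> matvec m A u i = r * u i" and "k < m" "i < m"
  shows "matmul m H (matmul m A H) i k = r * kdelta i k"
proof -
  have "matmul m A H l k = r * u l" if "l < m" for l
    using eig[OF that] Hk unfolding matmul_def matvec_def by simp
  then have "matmul m H (matmul m A H) i k = r * matmul m H H i k"
    unfolding matmul_def using Hk by (simp add: sum_distrib_left mult_ac)
  with HH assms(4,5) show ?thesis
    by simp
qed

lemma eigenbasis_conjugate: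
  assumes H: "symmetric_mat m H" and HH: "\<forall>i<m. \<forall>j<m. matmul m H H i j = kdelta i j"
    and W: "eigenbasis m (matmul m H (matmul m A H)) W e"
  shows "eigenbasis m A (\<lambda>k. matvec m H (W k)) e"
  unfolding eigenbasis_def orthonormal_def
proof safe
  fix k l assume "k < m" "l < m"
  have "dot m (matvec m H (W k)) (matvec m H (W l)) = dot m (W k) (matvec m H (matvec m H (W l)))"
    by (rule dot_matvec_symmetric[OF H])
  also have "\<dots> = dot m (W k) (W l)"
    using matvec_involution[OF HH] by (intro dot_cong) auto
  finally show "dot m (matvec m H (W k)) (matvec m H (W l)) = kdelta k l"
    using W \<open>k < m\<close> \<open>l < m\<close> unfolding eigenbasis_def orthonormal_def by simp
next
  fix k i assume "k < m" "i < m"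
  have "matvec m H (matvec m A (matvec m H (W k))) j = e k * W k j" if "j < m" for j
    using W \<open>k < m\<close> that unfolding eigenbasis_def by (simp add: matvec_matmul)
  then have HAHW:
    "matvec m H (matvec m H (matvec m A (matvec m H (W k)))) = matvec m H (\<lambda>j. e k * W k j)"
    by (rule matvec_cong)
  have "matvec m A (matvec m H (W k)) i = matvec m H (matvec m H (matvec m A (matvec m H (W k)))) i"
    by (rule matvec_involution[OF HH \<open>i < m\<close>, symmetric])
  also have "\<dots> = matvec m H (\<lambda>j. e k * W k j) i"
    by (simp only: HAHW)
  also have "\<dots> = e k * matvec m H (W k) i"
    unfolding matvec_def by (simp add: sum_distrib_left mult_ac)
  finally show "matvec m A (matvec m H (W k)) i = e k * matvec m H (W k) i" .
qed

lemma eigenbasis_Suc: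
  assumes M: "symmetric_mat (Suc n) M" and col: "\<forall>i<Suc n. M i n = r * kdelta i n"
    and V: "eigenbasis n M V e"
  shows "eigenbasis (Suc n) M
    (\<lambda>k j. if k < n then if j < n then V k j else 0 else kdelta j n) (e(n := r))"
    (is "eigenbasis _ _ ?W _")
  unfolding eigenbasis_def orthonormal_def
proof safe
  fix k l assume "k < Suc n" "l < Suc n"
  have "dot (Suc n) (?W k) (?W l) = dot n (?W k) (?W l) + ?W k n * ?W l n"
    unfolding dot_def by simp
  also have "dot n (?W k) (?W l) = (if k < n \<and> l < n then dot n (V k) (V l) else 0)"
    by (cases "k < n"; cases "l < n") (auto simp: dot_def kdelta_def intro!: sum.cong sum.neutral)
  finally show "dot (Suc n) (?W k) (?W l) = kdelta k l"
    using V \<open>k < Suc n\<close> \<open>l < Suc n\<close> unfolding eigenbasis_def orthonormal_def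
    by (auto simp: kdelta_def less_Suc_eq)
next
  fix k i assume k: "k < Suc n" and i: "i < Suc n"
  have row: "M n j = 0" if "j < n" for j
    using M col that unfolding symmetric_mat_def kdelta_def by auto
  show "matvec (Suc n) M (?W k) i = (e(n := r)) k * ?W k i"
  proof (cases "k < n")
    case True
    then have "matvec (Suc n) M (?W k) i = matvec n M (V k) i"
      unfolding matvec_def by simp
    with True i V row show ?thesis
      unfolding eigenbasis_def matvec_def by (auto simp: less_Suc_eq)
  next
    case False
    with k have "k = n"
      by simp
    then have "matvec (Suc n) M (?W k) i = M i n"
      unfolding matvec_def using sum_kdelta(4)[of n "Suc n" "M i"] by simp
    with \<open>k = n\<close> col i show ?thesis
      by (simp add: kdelta_commute)
  qed
qed

(* Deflation: conjugating A by the Householder reflection H with H e_n = u makes e_n an eigenvector, so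
   the leading n x n block is again symmetric and the induction hypothesis applies to it. *)
theorem symmetric_eigenbasis_exists: "symmetric_mat n A \<Longrightarrow> \<exists>V e. eigenbasis n A V e"
proof (induction n arbitrary: A)
  case 0
  show ?case
    by (simp add: eigenbasis_def orthonormal_def)
next
  case (Suc n)
  obtain u r where u: "dot (Suc n) u u = 1"
    and eig: "\<And>i. i < Suc n \<Longrightarrow> matvec (Suc n) A u i = r * u i"
    using symmetric_unit_eigenvector[OF zero_less_Suc Suc.prems] by metis
  obtain H where H: "symmetric_mat (Suc n) H"
    and HH: "\<forall>i<Suc n. \<forall>j<Suc n. matmul (Suc n) H H i j = kdelta i j" and Hn: "\<forall>i<Suc n. H i n = u i"
    using householder_reflection[OF u lessI] by metis
  define A' where "A' = matmul (Suc n) H (matmul (Suc n) A H)"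
  have A': "symmetric_mat (Suc n) A'"
    unfolding A'_def using H Suc.prems by (rule symmetric_mat_conjugate)
  have col: "\<forall>i<Suc n. A' i n = r * kdelta i n"
    unfolding A'_def using matmul_conjugate_column[OF HH Hn eig] by simp
  have "symmetric_mat n A'"
    using A' unfolding symmetric_mat_def by simp
  then obtain V e where "eigenbasis n A' V e"
    using Suc.IH by blast
  note eigenbasis_Suc[OF A' col this]
  then show ?case
    unfolding A'_def using eigenbasis_conjugate[OF H HH] by blast
qed

section \<open>The spectrum of the adjacency matrix\<close>

lemma orthonormal_rows:
  assumes V: "orthonormal n V" and "i < n" "j < n"
  shows "(\<Sum>k<n. V k i * V k j) = kdelta i j"
proof -
  define P where "P = mat n n (\<lambda>(k, i). V k i)"
  have P: "P \<in> carrier_mat n n" "transpose_mat P \<in> carrier_mat n n"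
    unfolding P_def by auto
  have "P * transpose_mat P = 1\<^sub>m n"
    using V unfolding P_def orthonormal_def
    by (intro eq_matI) (auto simp: scalar_prod_def dot_def lessThan_atLeast0 kdelta_def)
  then have "transpose_mat P * P = 1\<^sub>m n"
    using mat_mult_left_right_inverse[OF P] by blast
  then have "(transpose_mat P * P) $$ (i, j) = kdelta i j"
    using assms(2,3) by (simp add: kdelta_def)
  then show ?thesis
    using assms(2,3) unfolding P_def by (simp add: scalar_prod_def lessThan_atLeast0)
qed

lemma eigenbasis_expansion:
  assumes eb: "eigenbasis n M V e" and "i < n" "j < n"
  shows "M i j = (\<Sum>k<n. e k * V k i * V k j)"
proof -
  have "M i j = (\<Sum>l<n. M i l * kdelta l j)"
    using assms(3) by simp
  also have "\<dots> = (\<Sum>l<n. \<Sum>k<n. M i l * (V k l * V k j))"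
    using eb assms(3) unfolding eigenbasis_def
    by (intro sum.cong refl) (simp add: orthonormal_rows sum_distrib_left[symmetric])
  also have "\<dots> = (\<Sum>k<n. matvec n M (V k) i * V k j)"
    unfolding matvec_def by (subst sum.swap) (simp add: sum_distrib_right mult.assoc)
  also have "\<dots> = (\<Sum>k<n. e k * V k i * V k j)"
    using eb assms(2) unfolding eigenbasis_def by simp
  finally show ?thesis .
qed

lemma char_poly_eigenbasis:
  assumes Mat: "Mat \<in> carrier_mat n n" and eb: "eigenbasis n M V e"
    and entries: "\<And>i j. i < n \<Longrightarrow> j < n \<Longrightarrow> Mat $$ (i, j) = M i j"
  shows "char_poly Mat = (\<Prod>a\<leftarrow>map e [0..<n]. [:- a, 1:])"
proof -
  define P where "P = mat n n (\<lambda>(k, i). V k i)"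
  define Q where "Q = mat n n (\<lambda>(i, k). V k i)"
  define D where "D = mat n n (\<lambda>(i, j). if i = j then e i else 0)"
  have P: "P \<in> carrier_mat n n" and Q: "Q \<in> carrier_mat n n" and D: "D \<in> carrier_mat n n"
    unfolding P_def Q_def D_def by auto
  have V: "orthonormal n V"
    using eb unfolding eigenbasis_def ..
  have "P * Q = 1\<^sub>m n"
    using V unfolding orthonormal_def P_def Q_def
    by (intro eq_matI) (auto simp: scalar_prod_def dot_def lessThan_atLeast0 kdelta_def)
  moreover have "Q * P = 1\<^sub>m n"
    using orthonormal_rows[OF V] unfolding P_def Q_def
    by (intro eq_matI) (auto simp: scalar_prod_def lessThan_atLeast0 kdelta_def)
  moreover have "Mat = Q * D * P"
  proof (rule eq_matI)
    fix i j assume "i < dim_row (Q * D * P)" "j < dim_col (Q * D * P)"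
    then have ij: "i < n" "j < n"
      using P Q by auto
    have "(Q * D) $$ (i, k) = V k i * e k" if "k < n" for k
      using ij that sum_kdelta(4)[OF that, of "\<lambda>l. V l i * e l"]
      unfolding Q_def D_def
      by (simp add: scalar_prod_def lessThan_atLeast0 kdelta_def if_distrib cong: if_cong)
    then have "(Q * D * P) $$ (i, j) = (\<Sum>k<n. e k * V k i * V k j)"
      using ij Q D unfolding P_def by (simp add: scalar_prod_def lessThan_atLeast0 mult_ac)
    then show "Mat $$ (i, j) = (Q * D * P) $$ (i, j)"
      using eigenbasis_expansion[OF eb ij] entries[OF ij] by simp
  qed (use Mat Q P in auto)
  ultimately have "similar_mat Mat D"
    unfolding similar_mat_def similar_mat_wit_def Let_def using Mat P Q D by blast
  then have "char_poly Mat = char_poly D"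
    by (rule char_poly_similar)
  also have "\<dots> = (\<Prod>a\<leftarrow>diag_mat D. [:- a, 1:])"
    using D by (rule char_poly_upper_triangular) (simp add: upper_triangular_def D_def)
  also have "diag_mat D = map e [0..<n]"
    unfolding diag_mat_def D_def by simp
  finally show ?thesis .
qed

lemma proots_prod_linear_factors: "proots (\<Prod>a\<leftarrow>xs. [:- a, 1:]) = mset (xs :: real list)"
proof (induction xs)
  case (Cons a xs)
  have "(\<Prod>a\<leftarrow>xs. [:- a, 1:]) \<noteq> (0 :: real poly)"
    by auto
  with Cons.IH show ?case
    by (simp add: proots_mult del: mult_pCons_left)
qed simp

lemma sorted_all_but_one_between:
  fixes e :: "nat \<Rightarrow> real"
  assumes n: "n > 0"
  defines "s \<equiv> sort (map e [0..<n])"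
  obtains k0 where "k0 < n" "\<And>k. k < n \<Longrightarrow> k \<noteq> k0 \<Longrightarrow> s ! 0 \<le> e k \<and> e k \<le> s ! (n - 2)"
proof -
  have ls: "length s = n" and ss: "sorted s"
    unfolding s_def by simp_all
  have "mset s = mset (map e [0..<n])"
    unfolding s_def by simp
  then obtain p where p: "p permutes {..<n}" "permute_list p (map e [0..<n]) = s"
    by (metis mset_eq_permutation length_map length_upt diff_zero)
  have p_lt: "p i < n" if "i < n" for i
    using permutes_in_image[OF p(1)] that by simp
  have s_nth: "s ! i = e (p i)" if "i < n" for i
    using p that p_lt[OF that] by (auto simp: permute_list_nth)
  show ?thesis
  proof (rule that[of "p (n - 1)"])
    show "p (n - 1) < n"
      using n p_lt by simp
    fix k assume k: "k < n" "k \<noteq> p (n - 1)"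
    obtain i where i: "i < n" "p i = k"
      using permutes_image[OF p(1)] k(1) by (metis imageE lessThan_iff)
    with k(2) have "i \<noteq> n - 1"
      by auto
    with i(1) have "i \<le> n - 2"
      by linarith
    then have "s ! 0 \<le> s ! i" "s ! i \<le> s ! (n - 2)"
      using ss ls i(1) by (auto intro: sorted_nth_mono)
    then show "s ! 0 \<le> e k \<and> e k \<le> s ! (n - 2)"
      using s_nth[OF i(1)] i(2) by simp
  qed
qed

definition adj :: "(nat \<Rightarrow> nat \<Rightarrow> bool) \<Rightarrow> nat \<Rightarrow> nat \<Rightarrow> real" where
  "adj E i j = (if E i j then 1 else 0)"

lemma adjacency_eigenbasis:
  assumes E: "is_graph n E" and n: "n > 0"
  obtains V e k0 where "eigenbasis n (adj E) V e" "k0 < n"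
    "\<And>k. k < n \<Longrightarrow> k \<noteq> k0 \<Longrightarrow> \<bar>e k\<bar> \<le> spec_lambda n E"
proof -
  have "symmetric_mat n (adj E)"
    using E unfolding symmetric_mat_def adj_def is_graph_def by auto
  then obtain V e where eb: "eigenbasis n (adj E) V e"
    using symmetric_eigenbasis_exists by blast
  define s where "s = sort (map e [0..<n])"
  have "char_poly (adj_mat n E) = (\<Prod>a\<leftarrow>map e [0..<n]. [:- a, 1:])"
    by (rule char_poly_eigenbasis[OF _ eb]) (auto simp: adj_mat_def adj_def)
  then have eigs: "adj_eigs n E = rev s"
    unfolding adj_eigs_def s_def by (simp only: proots_prod_linear_factors sorted_list_of_multiset_mset)
  obtain k0 where k0: "k0 < n" and between: "\<And>k. k < n \<Longrightarrow> k \<noteq> k0 \<Longrightarrow> s ! 0 \<le> e k \<and> e k \<le> s ! (n - 2)"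
    using sorted_all_but_one_between[OF n, of e] unfolding s_def by blast
  have "\<bar>e k\<bar> \<le> spec_lambda n E" if "k < n" "k \<noteq> k0" for k
  proof -
    have "n \<ge> 2"
      using that k0 by linarith
    then have "adj_eigs n E ! 1 = s ! (n - 2)" "adj_eigs n E ! (n - 1) = s ! 0"
      unfolding eigs s_def by (simp_all add: rev_nth numeral_2_eq_2)
    with between[OF that] show ?thesis
      unfolding spec_lambda_def by linarith
  qed
  with eb k0 show ?thesis
    using that by blast
qed

section \<open>The mixing lemma\<close>

lemma sum_coeff_dot_dot:
  "(\<Sum>k<n. c k * dot n x (V k) * dot n y (V k)) = (\<Sum>i<n. \<Sum>j<n. x i * y j * (\<Sum>k<n. c k * V k i * V k j))"
proof -
  have "(\<Sum>k<n. c k * dot n x (V k) * dot n y (V k))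
      = (\<Sum>k<n. \<Sum>i<n. \<Sum>j<n. x i * y j * (c k * V k i * V k j))"
    unfolding dot_def by (simp add: sum_product sum_distrib_left mult_ac)
  also have "\<dots> = (\<Sum>i<n. \<Sum>k<n. \<Sum>j<n. x i * y j * (c k * V k i * V k j))"
    by (rule sum.swap)
  also have "\<dots> = (\<Sum>i<n. \<Sum>j<n. \<Sum>k<n. x i * y j * (c k * V k i * V k j))"
    by (rule sum.cong[OF refl]) (rule sum.swap)
  also have "\<dots> = (\<Sum>i<n. \<Sum>j<n. x i * y j * (\<Sum>k<n. c k * V k i * V k j))"
    by (simp add: sum_distrib_left)
  finally show ?thesis .
qed

lemma orthonormal_parseval:
  assumes "orthonormal n V"
  shows "(\<Sum>k<n. (dot n z (V k))\<^sup>2) = dot n z z"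
proof -
  have "(\<Sum>k<n. (dot n z (V k))\<^sup>2) = (\<Sum>k<n. 1 * dot n z (V k) * dot n z (V k))"
    by (simp add: power2_eq_square)
  also have "\<dots> = (\<Sum>i<n. \<Sum>j<n. z i * z j * kdelta i j)"
    unfolding sum_coeff_dot_dot using orthonormal_rows[OF assms] by simp
  also have "\<dots> = dot n z z"
    unfolding dot_def by (simp add: mult.assoc sum_distrib_left[symmetric])
  finally show ?thesis .
qed

lemma eigenbasis_dot_matvec:
  assumes "eigenbasis n M V e"
  shows "dot n x (matvec n M y) = (\<Sum>k<n. e k * dot n x (V k) * dot n y (V k))"
proof -
  have "dot n x (matvec n M y) = (\<Sum>i<n. \<Sum>j<n. x i * y j * M i j)"
    unfolding dot_def matvec_def by (simp add: sum_distrib_left mult_ac)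
  also have "\<dots> = (\<Sum>i<n. \<Sum>j<n. x i * y j * (\<Sum>k<n. e k * V k i * V k j))"
    using eigenbasis_expansion[OF assms] by simp
  finally show ?thesis
    by (simp only: sum_coeff_dot_dot)
qed

lemma eigenbasis_mixing:
  assumes eb: "eigenbasis n M V e" and k0: "k0 < n"
    and lam: "\<And>k. k < n \<Longrightarrow> k \<noteq> k0 \<Longrightarrow> \<bar>e k\<bar> \<le> lam" and "lam \<ge> 0"
  shows "\<bar>dot n x (matvec n M y) - e k0 * dot n x (V k0) * dot n y (V k0)\<bar>
           \<le> lam * sqrt (dot n x x) * sqrt (dot n y y)"
proof -
  define a where "a k = dot n x (V k)" for k
  define b where "b k = dot n y (V k)" for k
  have V: "orthonormal n V"
    using eb unfolding eigenbasis_def ..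
  have "dot n x (matvec n M y) - e k0 * a k0 * b k0 = (\<Sum>k\<in>{..<n} - {k0}. e k * a k * b k)"
    unfolding eigenbasis_dot_matvec[OF eb] a_def b_def using k0 by (simp add: sum_diff1)
  also have "\<bar>\<dots>\<bar> \<le> (\<Sum>k\<in>{..<n} - {k0}. lam * (\<bar>a k\<bar> * \<bar>b k\<bar>))"
    using lam
    by (intro order.trans[OF sum_abs] sum_mono) (auto simp: abs_mult mult.assoc intro!: mult_right_mono)
  also have "\<dots> \<le> lam * (\<Sum>k<n. \<bar>a k\<bar> * \<bar>b k\<bar>)"
    unfolding sum_distrib_left[symmetric] using \<open>lam \<ge> 0\<close>
    by (intro mult_left_mono sum_mono2) auto
  also have "\<dots> \<le> lam * (L2_set a {..<n} * L2_set b {..<n})"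
    using \<open>lam \<ge> 0\<close> by (intro mult_left_mono L2_set_mult_ineq)
  also have "\<dots> = lam * sqrt (dot n x x) * sqrt (dot n y y)"
    unfolding L2_set_def a_def b_def orthonormal_parseval[OF V] by simp
  finally show ?thesis
    unfolding a_def b_def .
qed

section \<open>Edges between vertex sets\<close>

lemma spec_lambda_nonneg: "spec_lambda n E \<ge> 0"
  unfolding spec_lambda_def by simp

lemma min_deg_le_deg: "v < n \<Longrightarrow> min_deg n E \<le> deg n E v"
  unfolding min_deg_def by (intro Min_le) auto

lemma deg_le_max_deg: "v < n \<Longrightarrow> deg n E v \<le> max_deg n E"
  unfolding max_deg_def by (intro Max_ge) auto

lemma finite_nbhd [simp]: "finite (nbhd n E v)"
  unfolding nbhd_def by simp

lemma nbhd_subset: "nbhd n E v \<subseteq> {..<n}"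
  unfolding nbhd_def by auto

lemma matvec_adj_indicator:
  assumes "i < n"
  shows "matvec n (adj E) (indicator S) i = real (card (nbhd n E i \<inter> S))"
proof -
  have "matvec n (adj E) (indicator S) i = (\<Sum>j<n. indicator (nbhd n E i \<inter> S) j)"
    unfolding matvec_def adj_def nbhd_def by (intro sum.cong) (auto simp: indicator_def)
  also have "\<dots> = real (card ({..<n} \<inter> (nbhd n E i \<inter> S)))"
    unfolding indicator_def by (simp add: Int_def)
  also have "{..<n} \<inter> (nbhd n E i \<inter> S) = nbhd n E i \<inter> S"
    unfolding nbhd_def by auto
  finally show ?thesis .
qed

lemma dot_indicator:
  assumes "S \<subseteq> {..<n}"
  shows "dot n (indicator S) f = (\<Sum>i\<in>S. f i)"
proof -
  have "dot n (indicator S) f = (\<Sum>i<n. if i \<in> S then f i else 0)"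
    unfolding dot_def by (intro sum.cong) (auto simp: indicator_def)
  also have "\<dots> = (\<Sum>i\<in>{..<n} \<inter> S. f i)"
    by (simp add: sum.inter_restrict)
  finally show ?thesis
    using assms by (simp add: Int_absorb1)
qed

lemma dot_indicator_self: "S \<subseteq> {..<n} \<Longrightarrow> dot n (indicator S) (indicator S) = real (card S)"
  by (simp add: dot_indicator)

lemma sum_sq_dev_mean:
  fixes v :: "nat \<Rightarrow> real"
  assumes "n > 0"
  shows "(\<Sum>i<n. (v i - (\<Sum>j<n. v j) / n)\<^sup>2) = dot n v v - (\<Sum>j<n. v j)\<^sup>2 / n"
proof -
  define a where "a = (\<Sum>j<n. v j)"
  have "(\<Sum>i<n. (v i - a / n)\<^sup>2) = (\<Sum>i<n. v i * v i) - 2 * (a / n) * a + n * (a / n)\<^sup>2"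
    unfolding a_def
    by (simp add: power2_eq_square algebra_simps sum.distrib sum_subtractf sum_distrib_left
        sum_divide_distrib)
  also have "\<dots> = dot n v v - a\<^sup>2 / n"
    using assms unfolding dot_def by (simp add: power2_eq_square field_simps)
  finally show ?thesis
    unfolding a_def .
qed

lemma eigenvalue_abs_le_max_deg:
  assumes eig: "\<And>i. i < n \<Longrightarrow> matvec n (adj E) v i = \<mu> * v i" and "i0 < n" "v i0 \<noteq> 0"
  shows "\<bar>\<mu>\<bar> \<le> real (max_deg n E)"
proof -
  obtain i where i: "i < n" "\<bar>v i\<bar> = Max ((\<lambda>j. \<bar>v j\<bar>) ` {..<n})"
    using Max_in[of "(\<lambda>j. \<bar>v j\<bar>) ` {..<n}"] \<open>i0 < n\<close> by fastforce
  have imax: "\<bar>v j\<bar> \<le> \<bar>v i\<bar>" if "j < n" for j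
    unfolding i(2) using that by (intro Max_ge) auto
  have "0 < \<bar>v i0\<bar>"
    using assms(3) by simp
  with imax[OF assms(2)] have vi: "\<bar>v i\<bar> > 0"
    by linarith
  have "\<bar>\<mu>\<bar> * \<bar>v i\<bar> = \<bar>\<Sum>j<n. adj E i j * v j\<bar>"
    using eig[OF i(1)] unfolding matvec_def by (simp add: abs_mult)
  also have "\<dots> \<le> (\<Sum>j<n. adj E i j * \<bar>v i\<bar>)"
    using imax by (intro order.trans[OF sum_abs] sum_mono) (auto simp: adj_def)
  also have "\<dots> = real (deg n E i) * \<bar>v i\<bar>"
    using matvec_adj_indicator[OF i(1), of E UNIV]
    unfolding sum_distrib_right[symmetric] matvec_def deg_def by simp
  also have "\<dots> \<le> real (max_deg n E) * \<bar>v i\<bar>"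
    using deg_le_max_deg[OF i(1)] by (intro mult_right_mono) auto
  finally show ?thesis
    using vi by simp
qed

lemma eigenbasis_adj_abs_le_max_deg:
  assumes eb: "eigenbasis n (adj E) V e" and k: "k < n"
  shows "\<bar>e k\<bar> \<le> real (max_deg n E)"
proof -
  have "dot n (V k) (V k) = 1"
    using eb k unfolding eigenbasis_def orthonormal_def by (simp add: kdelta_def)
  have "\<exists>i0<n. V k i0 \<noteq> 0"
  proof (rule ccontr)
    assume "\<not> (\<exists>i0<n. V k i0 \<noteq> 0)"
    then have "dot n (V k) (V k) = 0"
      unfolding dot_def by simp
    with \<open>dot n (V k) (V k) = 1\<close> show False
      by simp
  qed
  then obtain i0 where "i0 < n" "V k i0 \<noteq> 0"
    by blast
  with eb k show ?thesis
    unfolding eigenbasis_def by (intro eigenvalue_abs_le_max_deg[of n E "V k"]) auto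
qed

(* By top_eigenvector_near_constant, the unit top eigenvector lies within squared distance
   flatness_defect of the constant vectors; expansion_defect is the resulting error factor in the
   mixing bound edges_between_le. *)
definition flatness_defect :: "nat \<Rightarrow> (nat \<Rightarrow> nat \<Rightarrow> bool) \<Rightarrow> real" where
  "flatness_defect n E = 1 - (real (min_deg n E) - spec_lambda n E) / real (max_deg n E)"

definition expansion_defect :: "nat \<Rightarrow> (nat \<Rightarrow> nat \<Rightarrow> bool) \<Rightarrow> real" where
  "expansion_defect n E =
     2 * sqrt (flatness_defect n E) + flatness_defect n E + spec_lambda n E / real (max_deg n E)"

lemma top_eigenvector_near_constant:
  assumes E: "is_graph n E" and n: "n > 0" and D: "max_deg n E > 0"
    and eb: "eigenbasis n (adj E) V e" and k0: "k0 < n"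
    and lam: "\<And>k. k < n \<Longrightarrow> k \<noteq> k0 \<Longrightarrow> \<bar>e k\<bar> \<le> spec_lambda n E"
  shows "(\<Sum>i<n. (V k0 i - (\<Sum>j<n. V k0 j) / n)\<^sup>2) \<le> flatness_defect n E"
proof -
  define v where "v = V k0"
  define a where "a = (\<Sum>j<n. v j)"
  define one where "one = (indicator {..<n} :: nat \<Rightarrow> real)"
  define \<Delta> where "\<Delta> = real (max_deg n E)"
  have vv: "dot n v v = 1"
    using eb k0 unfolding v_def eigenbasis_def orthonormal_def by (simp add: kdelta_def)
  have "\<bar>e k0\<bar> \<le> \<Delta>"
    unfolding \<Delta>_def by (rule eigenbasis_adj_abs_le_max_deg[OF eb k0])
  then have "\<bar>e k0\<bar> * a\<^sup>2 \<le> \<Delta> * a\<^sup>2"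
    by (intro mult_right_mono) auto
  moreover have "e k0 * a * a \<le> \<bar>e k0\<bar> * a\<^sup>2"
    unfolding power2_eq_square mult.assoc by (intro mult_right_mono) auto
  ultimately have top: "e k0 * a * a \<le> \<Delta> * a\<^sup>2"
    by linarith
  have mix: "\<bar>dot n one (matvec n (adj E) one) - e k0 * a * a\<bar> \<le> spec_lambda n E * sqrt n * sqrt n"
    using eigenbasis_mixing[OF eb k0 lam spec_lambda_nonneg, of one one]
    unfolding one_def dot_indicator_self[OF order_refl] dot_commute[of n "V k0"]
    unfolding dot_indicator[OF order_refl] a_def v_def by simp
  have "(\<Sum>i<n. real (min_deg n E)) \<le> (\<Sum>i<n. real (deg n E i))"
    by (intro sum_mono) (simp add: min_deg_le_deg)
  then have "real n * real (min_deg n E) \<le> (\<Sum>i<n. real (deg n E i))"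
    by simp
  also have "\<dots> = dot n one (matvec n (adj E) one)"
    unfolding one_def dot_indicator[OF order_refl] using matvec_adj_indicator
    by (intro sum.cong) (auto simp: deg_def nbhd_subset Int_absorb2)
  also have "\<dots> \<le> e k0 * a * a + spec_lambda n E * real n"
    using mix by (simp add: mult.assoc)
  finally have "real n * (real (min_deg n E) - spec_lambda n E) \<le> \<Delta> * a\<^sup>2"
    using top by (simp add: algebra_simps)
  then have "(real (min_deg n E) - spec_lambda n E) / \<Delta> \<le> a\<^sup>2 / n"
    using D n unfolding \<Delta>_def by (simp add: field_simps)
  then show ?thesis
    using sum_sq_dev_mean[OF n, of v] vv unfolding flatness_defect_def \<Delta>_def a_def v_def by simp
qed

lemma abs_sum_le_sqrt_card:
  fixes f :: "'a \<Rightarrow> real"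
  shows "\<bar>\<Sum>i\<in>T. f i\<bar> \<le> sqrt (card T) * sqrt (\<Sum>i\<in>T. (f i)\<^sup>2)"
proof -
  have "\<bar>\<Sum>i\<in>T. f i\<bar> \<le> (\<Sum>i\<in>T. \<bar>1\<bar> * \<bar>f i\<bar>)"
    using sum_abs by simp
  also have "\<dots> \<le> L2_set (\<lambda>_. 1) T * L2_set f T"
    by (rule L2_set_mult_ineq)
  finally show ?thesis
    unfolding L2_set_def by simp
qed

lemma dot_indicator_near_constant:
  assumes n: "n > 0" and v: "dot n v v = 1" and T: "T \<subseteq> {..<n}"
    and \<theta>: "(\<Sum>i<n. (v i - (\<Sum>j<n. v j) / n)\<^sup>2) \<le> \<theta>"
  shows "\<bar>dot n (indicator T) v\<bar> \<le> real (card T) / sqrt n + sqrt (card T) * sqrt \<theta>"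
proof -
  define a where "a = (\<Sum>j<n. v j)"
  define r where "r i = v i - a / n" for i
  have "dot n (indicator T) v = a / n * card T + (\<Sum>i\<in>T. r i)"
    unfolding dot_indicator[OF T] r_def by (simp add: sum_subtractf)
  moreover have "\<bar>\<Sum>i\<in>T. r i\<bar> \<le> sqrt (card T) * sqrt \<theta>"
  proof -
    have "(\<Sum>i\<in>T. (r i)\<^sup>2) \<le> (\<Sum>i<n. (r i)\<^sup>2)"
      using T by (intro sum_mono2) auto
    with \<theta> have "sqrt (\<Sum>i\<in>T. (r i)\<^sup>2) \<le> sqrt \<theta>"
      unfolding r_def a_def by simp
    then have "sqrt (card T) * sqrt (\<Sum>i\<in>T. (r i)\<^sup>2) \<le> sqrt (card T) * sqrt \<theta>"
      by (rule mult_left_mono) simp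
    with abs_sum_le_sqrt_card[of r T] show ?thesis
      by linarith
  qed
  moreover have "\<bar>a / n * card T\<bar> \<le> real (card T) / sqrt n"
  proof -
    have "(\<Sum>i<n. (v i)\<^sup>2) = 1"
      using v unfolding dot_def by (simp add: power2_eq_square)
    then have "\<bar>a\<bar> \<le> sqrt n"
      using abs_sum_le_sqrt_card[of v "{..<n}"] unfolding a_def by simp
    then have "\<bar>a\<bar> * card T / n \<le> sqrt n * card T / n"
      using n by (intro divide_right_mono mult_right_mono) auto
    also have "\<dots> = real (card T) / sqrt n"
      using n by (simp add: field_simps real_sqrt_mult[symmetric])
    finally show ?thesis
      by (simp add: abs_mult)
  qed
  ultimately show ?thesis
    by linarith
qed

lemma mixing_product_le:
  fixes \<sigma> \<alpha> n \<rho> :: real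
  assumes n: "n > 0" and \<sigma>: "0 \<le> \<sigma>" "\<sigma> \<le> n" and \<alpha>: "0 \<le> \<alpha>" "\<alpha> \<le> n" and \<rho>: "\<rho> \<ge> 0"
  shows "(\<sigma> / sqrt n + sqrt \<sigma> * \<rho>) * (\<alpha> / sqrt n + sqrt \<alpha> * \<rho>)
           \<le> \<sigma> * \<alpha> / n + sqrt \<sigma> * sqrt \<alpha> * (2 * \<rho> + \<rho>\<^sup>2)"
proof -
  have le_sqrt: "x / sqrt n \<le> sqrt x" if "0 \<le> x" "x \<le> n" for x
  proof -
    have "sqrt x * sqrt x \<le> sqrt x * sqrt n"
      using that by (intro mult_left_mono) auto
    then show ?thesis
      using that n by (simp add: divide_le_eq)
  qed
  have "\<sigma> / sqrt n * (sqrt \<alpha> * \<rho>) \<le> sqrt \<sigma> * (sqrt \<alpha> * \<rho>)"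
    using le_sqrt[OF \<sigma>] \<alpha> \<rho> by (intro mult_right_mono) auto
  moreover have "sqrt \<sigma> * \<rho> * (\<alpha> / sqrt n) \<le> sqrt \<sigma> * \<rho> * sqrt \<alpha>"
    using le_sqrt[OF \<alpha>] \<sigma> \<rho> by (intro mult_left_mono) auto
  moreover have "\<sigma> / sqrt n * (\<alpha> / sqrt n) = \<sigma> * \<alpha> / n"
    using n by (simp add: power2_eq_square[symmetric])
  moreover have "(\<sigma> / sqrt n + sqrt \<sigma> * \<rho>) * (\<alpha> / sqrt n + sqrt \<alpha> * \<rho>)
      = \<sigma> / sqrt n * (\<alpha> / sqrt n) + \<sigma> / sqrt n * (sqrt \<alpha> * \<rho>)
        + sqrt \<sigma> * \<rho> * (\<alpha> / sqrt n) + sqrt \<sigma> * \<rho> * (sqrt \<alpha> * \<rho>)"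
    by (simp only: distrib_left distrib_right add.assoc)
  moreover have "sqrt \<sigma> * sqrt \<alpha> * (2 * \<rho> + \<rho>\<^sup>2)
      = 2 * (sqrt \<sigma> * (sqrt \<alpha> * \<rho>)) + sqrt \<sigma> * \<rho> * (sqrt \<alpha> * \<rho>)"
    by (simp add: algebra_simps power2_eq_square)
  moreover have "sqrt \<sigma> * \<rho> * sqrt \<alpha> = sqrt \<sigma> * (sqrt \<alpha> * \<rho>)"
    by (simp add: mult_ac)
  ultimately show ?thesis
    by linarith
qed

lemma count_from_mixing:
  fixes \<eta> \<kappa> \<sigma> \<alpha> \<beta> :: real
  assumes \<eta>: "\<eta> > 0" and \<kappa>: "0 \<le> \<kappa>" "\<kappa> \<le> \<eta>\<^sup>2" and \<sigma>: "0 \<le> \<sigma>" and \<alpha>: "0 \<le> \<alpha>"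
    and \<beta>: "\<beta> \<le> \<eta> / 2" and mix: "\<eta> * \<sigma> \<le> \<sigma> * \<beta> + sqrt \<sigma> * sqrt \<alpha> * \<kappa>"
  shows "\<sigma> \<le> 4 * \<kappa> * \<alpha>"
proof (cases "\<sigma> = 0")
  case True
  with \<kappa> \<alpha> show ?thesis
    by simp
next
  case False
  with \<sigma> have sqrt_pos: "sqrt \<sigma> > 0"
    by simp
  have "\<sigma> * \<beta> \<le> \<sigma> * (\<eta> / 2)"
    using mult_left_mono[OF \<beta> \<sigma>] .
  with mix have "sqrt \<sigma> * (\<eta> * sqrt \<sigma> / 2) \<le> sqrt \<sigma> * (\<kappa> * sqrt \<alpha>)"
    using \<sigma> by (simp add: algebra_simps)
  then have "\<eta> * sqrt \<sigma> / 2 \<le> \<kappa> * sqrt \<alpha>"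
    using sqrt_pos by simp
  then have "(\<eta> * sqrt \<sigma> / 2)\<^sup>2 \<le> (\<kappa> * sqrt \<alpha>)\<^sup>2"
    using \<eta> \<sigma> by (intro power_mono) auto
  then have "\<eta>\<^sup>2 * \<sigma> \<le> 4 * \<kappa>\<^sup>2 * \<alpha>"
    using \<sigma> \<alpha> by (simp add: power_mult_distrib power_divide)
  moreover have "\<kappa> * \<sigma> \<le> \<eta>\<^sup>2 * \<sigma>"
    using \<kappa> \<sigma> by (intro mult_right_mono) auto
  moreover have "\<eta>\<^sup>2 * \<sigma> > 0"
    using \<eta> \<sigma> False by simp
  ultimately have "\<kappa> > 0" "\<kappa> * \<sigma> \<le> \<kappa> * (4 * \<kappa> * \<alpha>)"
    using \<kappa> by (auto simp: power2_eq_square mult_ac intro: neq_le_trans)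
  then show ?thesis
    by simp
qed

lemma flatness_defect_nonneg:
  assumes "n > 0" "max_deg n E > 0"
  shows "flatness_defect n E \<ge> 0"
proof -
  have "real (min_deg n E) - spec_lambda n E \<le> real (max_deg n E)"
    using min_deg_le_deg[of 0 n E] deg_le_max_deg[of 0 n E] spec_lambda_nonneg[of n E] assms(1)
    by linarith
  with assms(2) show ?thesis
    unfolding flatness_defect_def by (simp add: field_simps)
qed

lemma expansion_defect_nonneg: "n > 0 \<Longrightarrow> max_deg n E > 0 \<Longrightarrow> expansion_defect n E \<ge> 0"
  using flatness_defect_nonneg spec_lambda_nonneg unfolding expansion_defect_def by simp

lemma top_eigenvalue_term_le:
  assumes E: "is_graph n E" and n: "n > 0" and D: "max_deg n E > 0"
    and eb: "eigenbasis n (adj E) V e" and k0: "k0 < n"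
    and lam: "\<And>k. k < n \<Longrightarrow> k \<noteq> k0 \<Longrightarrow> \<bar>e k\<bar> \<le> spec_lambda n E"
    and S: "S \<subseteq> {..<n}" and A: "A \<subseteq> {..<n}"
  defines "\<theta> \<equiv> flatness_defect n E"
  shows "e k0 * dot n (indicator S) (V k0) * dot n (indicator A) (V k0)
           \<le> real (max_deg n E) * (real (card S) * real (card A) / n
                + sqrt (card S) * sqrt (card A) * (2 * sqrt \<theta> + \<theta>))"
proof -
  define b where "b T = real (card T) / sqrt n + sqrt (card T) * sqrt \<theta>" for T :: "nat set"
  have \<theta>: "\<theta> \<ge> 0"
    unfolding \<theta>_def using flatness_defect_nonneg[OF n D] .
  have vv: "dot n (V k0) (V k0) = 1"
    using eb k0 unfolding eigenbasis_def orthonormal_def by (simp add: kdelta_def)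
  have flat: "(\<Sum>i<n. (V k0 i - (\<Sum>j<n. V k0 j) / n)\<^sup>2) \<le> \<theta>"
    unfolding \<theta>_def by (rule top_eigenvector_near_constant[OF E n D eb k0 lam])
  have "e k0 * dot n (indicator S) (V k0) * dot n (indicator A) (V k0)
      \<le> \<bar>e k0\<bar> * (\<bar>dot n (indicator S) (V k0)\<bar> * \<bar>dot n (indicator A) (V k0)\<bar>)"
    by (simp add: abs_mult[symmetric] mult.assoc)
  also have "\<dots> \<le> real (max_deg n E) * (b S * b A)"
  proof (intro mult_mono)
    show "\<bar>dot n (indicator S) (V k0)\<bar> \<le> b S" "\<bar>dot n (indicator A) (V k0)\<bar> \<le> b A"
      unfolding b_def using dot_indicator_near_constant[OF n vv _ flat] S A by auto
    show "\<bar>e k0\<bar> \<le> real (max_deg n E)"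
      by (rule eigenbasis_adj_abs_le_max_deg[OF eb k0])
    show "0 \<le> b S"
      unfolding b_def using \<theta> by auto
  qed auto
  also have "\<dots> \<le> real (max_deg n E) * (real (card S) * real (card A) / n
      + sqrt (card S) * sqrt (card A) * (2 * sqrt \<theta> + \<theta>))"
    unfolding b_def using card_mono[OF _ S] card_mono[OF _ A] n \<theta>
    by (intro mult_left_mono) (auto intro: order.trans[OF mixing_product_le])
  finally show ?thesis .
qed

lemma edges_between_le:
  assumes E: "is_graph n E" and n: "n > 0" and D: "max_deg n E > 0"
    and S: "S \<subseteq> {..<n}" and A: "A \<subseteq> {..<n}"
  shows "(\<Sum>u\<in>S. real (card (nbhd n E u \<inter> A)))
           \<le> real (max_deg n E) * (real (card S) * real (card A) / n
                + expansion_defect n E * sqrt (card S) * sqrt (card A))"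
proof -
  obtain V e k0 where eb: "eigenbasis n (adj E) V e" and k0: "k0 < n"
    and lam: "\<And>k. k < n \<Longrightarrow> k \<noteq> k0 \<Longrightarrow> \<bar>e k\<bar> \<le> spec_lambda n E"
    using adjacency_eigenbasis[OF E n] by metis
  have "(\<Sum>u\<in>S. real (card (nbhd n E u \<inter> A))) = dot n (indicator S) (matvec n (adj E) (indicator A))"
    unfolding dot_indicator[OF S] using S by (intro sum.cong) (auto simp: matvec_adj_indicator)
  also have "\<dots> \<le> e k0 * dot n (indicator S) (V k0) * dot n (indicator A) (V k0)
      + spec_lambda n E * sqrt (card S) * sqrt (card A)"
    using eigenbasis_mixing[OF eb k0 lam spec_lambda_nonneg, of "indicator S" "indicator A"]
    unfolding dot_indicator_self[OF S] dot_indicator_self[OF A] by linarith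
  also have "\<dots> \<le> real (max_deg n E) * (real (card S) * real (card A) / n
      + sqrt (card S) * sqrt (card A) * (2 * sqrt (flatness_defect n E) + flatness_defect n E))
      + spec_lambda n E * sqrt (card S) * sqrt (card A)"
    using top_eigenvalue_term_le[OF E n D eb k0 lam S A] by linarith
  also have "\<dots> = real (max_deg n E) * (real (card S) * real (card A) / n
      + expansion_defect n E * sqrt (card S) * sqrt (card A))"
    using D unfolding expansion_defect_def by (simp add: field_simps)
  finally show ?thesis .
qed

lemma card_rich_vertices_le:
  assumes E: "is_graph n E" and n: "n > 0" and D: "max_deg n E > 0"
    and A: "A \<subseteq> {..<n}" and S: "S \<subseteq> {..<n}"
    and rich: "\<And>v. v \<in> S \<Longrightarrow> \<eta> * real (max_deg n E) < real (card (nbhd n E v \<inter> A))"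
    and \<eta>: "\<eta> \<ge> 0" "2 * real (card A) / n \<le> \<eta>" "expansion_defect n E \<le> \<eta>\<^sup>2"
  shows "real (card S) \<le> 4 * expansion_defect n E * real (card A)"
proof (cases "\<eta> = 0")
  case True
  with \<eta>(2) n have "A = {}"
    using finite_subset[OF A] by (simp add: divide_le_0_iff)
  with rich True have "S = {}"
    by fastforce
  with \<open>A = {}\<close> show ?thesis
    by simp
next
  case False
  define \<Delta> \<kappa> \<sigma> \<alpha> where "\<Delta> = real (max_deg n E)" and "\<kappa> = expansion_defect n E"
    and "\<sigma> = real (card S)" and "\<alpha> = real (card A)"
  have "\<sigma> * (\<eta> * \<Delta>) \<le> (\<Sum>u\<in>S. real (card (nbhd n E u \<inter> A)))"
    using sum_mono[of S "\<lambda>_. \<eta> * \<Delta>"] rich unfolding \<sigma>_def \<Delta>_def by (simp add: less_imp_le)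
  also have "\<dots> \<le> \<Delta> * (\<sigma> * \<alpha> / n + \<kappa> * sqrt \<sigma> * sqrt \<alpha>)"
    unfolding \<Delta>_def \<kappa>_def \<sigma>_def \<alpha>_def by (rule edges_between_le[OF E n D S A])
  finally have "\<Delta> * (\<eta> * \<sigma>) \<le> \<Delta> * (\<sigma> * (\<alpha> / n) + sqrt \<sigma> * sqrt \<alpha> * \<kappa>)"
    by (simp add: mult_ac)
  then have "\<eta> * \<sigma> \<le> \<sigma> * (\<alpha> / n) + sqrt \<sigma> * sqrt \<alpha> * \<kappa>"
    using D unfolding \<Delta>_def by simp
  with False \<eta> n show ?thesis
    unfolding \<kappa>_def \<sigma>_def \<alpha>_def
    by (intro count_from_mixing[where \<beta> = "real (card A) / n"] expansion_defect_nonneg[OF n D])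
      (auto simp: field_simps)
qed

section \<open>Expander sequences\<close>

lemma smalloI_bound:
  fixes f g h :: "nat \<Rightarrow> real"
  assumes h: "h \<longlonglongrightarrow> 0" and bound: "eventually (\<lambda>n. \<bar>f n\<bar> \<le> h n * \<bar>g n\<bar>) sequentially"
  shows "f \<in> o(g)"
proof (rule landau_o.smallI)
  fix c :: real assume "c > 0"
  with h have "eventually (\<lambda>n. \<bar>h n\<bar> < c) sequentially"
    by (simp add: tendsto_iff dist_real_def)
  with bound show "eventually (\<lambda>n. norm (f n) \<le> c * norm (g n)) sequentially"
  proof eventually_elim
    case (elim n)
    then have "h n * \<bar>g n\<bar> \<le> c * \<bar>g n\<bar>"
      by (intro mult_right_mono) auto
    with elim show ?case
      by simp
  qed
qed

lemma expander_min_deg_pos: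
  assumes "expander_sequence G"
  shows "eventually (\<lambda>n. 0 < min_deg n (G n)) sequentially"
proof -
  have "(\<lambda>n. real (max_deg n (G n)) / real (min_deg n (G n))) \<longlonglongrightarrow> 1"
    using assms unfolding expander_sequence_def by blast
  then have "eventually (\<lambda>n. real (max_deg n (G n)) / real (min_deg n (G n)) > 1/2) sequentially"
    by (rule order_tendstoD) simp
  then show ?thesis
    by eventually_elim (rule gr0I, simp)
qed

lemma expansion_defect_tendsto_0:
  assumes "expander_sequence G"
  shows "(\<lambda>n. expansion_defect n (G n)) \<longlonglongrightarrow> 0"
proof -
  define d \<Delta> lam where "d n = real (min_deg n (G n))" and "\<Delta> n = real (max_deg n (G n))"
    and "lam n = spec_lambda n (G n)" for n
  have "(\<lambda>n. \<Delta> n / d n) \<longlonglongrightarrow> 1" and "lam \<in> o(\<Delta>)"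
    using assms unfolding expander_sequence_def d_def \<Delta>_def lam_def by auto
  then have d\<Delta>: "(\<lambda>n. d n / \<Delta> n) \<longlonglongrightarrow> 1" and lam\<Delta>: "(\<lambda>n. lam n / \<Delta> n) \<longlonglongrightarrow> 0"
    using tendsto_inverse[of "\<lambda>n. \<Delta> n / d n" 1] smalloD_tendsto by auto
  have "(\<lambda>n. flatness_defect n (G n)) = (\<lambda>n. 1 - d n / \<Delta> n + lam n / \<Delta> n)"
    unfolding flatness_defect_def d_def \<Delta>_def lam_def by (simp add: diff_divide_distrib algebra_simps)
  moreover have "(\<lambda>n. 1 - d n / \<Delta> n + lam n / \<Delta> n) \<longlonglongrightarrow> 1 - 1 + 0"
    by (intro tendsto_intros d\<Delta> lam\<Delta>)
  ultimately have "(\<lambda>n. flatness_defect n (G n)) \<longlonglongrightarrow> 0"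
    by simp
  then have "(\<lambda>n. 2 * sqrt (flatness_defect n (G n)) + flatness_defect n (G n) + lam n / \<Delta> n)
      \<longlonglongrightarrow> 2 * sqrt 0 + 0 + 0"
    by (intro tendsto_intros lam\<Delta>)
  then show ?thesis
    unfolding expansion_defect_def lam_def \<Delta>_def by simp
qed

lemma subgraph_nbhd_ratio_le:
  assumes sub: "\<And>u v. E' u v \<Longrightarrow> E u v" and u: "u < n"
    and half: "real (deg n E u) \<le> 2 * real (deg n E' u)"
    and A: "real (card (nbhd n E u \<inter> A)) \<le> t" and t: "0 \<le> t"
  shows "real (card (nbhd n E' u \<inter> A)) / real (card (nbhd n E' u))
           \<le> (if 0 < min_deg n E then 2 * t / real (min_deg n E) else 1)"
proof -
  have "card (nbhd n E' u \<inter> A) \<le> card (nbhd n E' u)"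
    by (intro card_mono) auto
  then have le_1: "real (card (nbhd n E' u \<inter> A)) / real (card (nbhd n E' u)) \<le> 1"
    by (auto simp: divide_le_eq_1 card_gt_0_iff)
  have "card (nbhd n E' u \<inter> A) \<le> card (nbhd n E u \<inter> A)"
    using sub unfolding nbhd_def by (intro card_mono) auto
  with A have "real (card (nbhd n E' u \<inter> A)) \<le> t"
    by linarith
  moreover have "real (min_deg n E) / 2 \<le> real (card (nbhd n E' u))"
    using half min_deg_le_deg[OF u, of E] unfolding deg_def by simp
  ultimately have "0 < min_deg n E \<Longrightarrow>
      real (card (nbhd n E' u \<inter> A)) / real (card (nbhd n E' u)) \<le> t / (real (min_deg n E) / 2)"
    using t by (intro frac_le) auto
  with le_1 show ?thesis
    by (simp add: field_simps)
qed

lemma null_sequence_above: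
  fixes \<kappa> \<alpha> :: "nat \<Rightarrow> real"
  assumes \<kappa>: "\<kappa> \<longlonglongrightarrow> 0" and \<alpha>: "\<alpha> \<longlonglongrightarrow> 0"
  obtains \<eta> where "\<eta> \<longlonglongrightarrow> 0" "\<And>n. 0 \<le> \<eta> n" "\<And>n. 2 * \<alpha> n \<le> \<eta> n" "\<And>n. \<kappa> n \<le> (\<eta> n)\<^sup>2"
proof
  define \<eta> where "\<eta> n = max (2 * \<alpha> n) (sqrt \<bar>\<kappa> n\<bar>)" for n
  have "\<eta> \<longlonglongrightarrow> max (2 * 0) (sqrt \<bar>0\<bar>)"
    unfolding \<eta>_def by (intro tendsto_intros \<kappa> \<alpha>)
  then show "\<eta> \<longlonglongrightarrow> 0"
    by simp
  show "0 \<le> \<eta> n" "2 * \<alpha> n \<le> \<eta> n" for n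
    unfolding \<eta>_def by (simp_all add: le_max_iff_disj)
  show "\<kappa> n \<le> (\<eta> n)\<^sup>2" for n
  proof -
    have "(sqrt \<bar>\<kappa> n\<bar>)\<^sup>2 \<le> (\<eta> n)\<^sup>2"
      unfolding \<eta>_def by (intro power_mono) auto
    then show ?thesis
      by simp
  qed
qed

lemma expander_ratio_bound_tendsto_0:
  assumes exp: "expander_sequence G" and \<eta>: "\<eta> \<longlonglongrightarrow> 0"
  shows "(\<lambda>n. if 0 < min_deg n (G n) then 2 * (\<eta> n * real (max_deg n (G n))) / real (min_deg n (G n))
           else 1) \<longlonglongrightarrow> 0"
proof -
  have "(\<lambda>n. 2 * \<eta> n * (real (max_deg n (G n)) / real (min_deg n (G n)))) \<longlonglongrightarrow> 2 * 0 * 1"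
    using exp unfolding expander_sequence_def by (intro tendsto_intros \<eta>) auto
  moreover have "eventually (\<lambda>n. 2 * \<eta> n * (real (max_deg n (G n)) / real (min_deg n (G n)))
      = (if 0 < min_deg n (G n) then 2 * (\<eta> n * real (max_deg n (G n))) / real (min_deg n (G n)) else 1))
      sequentially"
    using expander_min_deg_pos[OF exp] by eventually_elim simp
  ultimately show ?thesis
    using tendsto_cong by force
qed

lemma expander_sparse_neighbourhoods:
  assumes exp: "expander_sequence G"
    and sub: "\<And>n u v. Gt n u v \<Longrightarrow> G n u v"
    and half: "\<And>n v. v < n \<Longrightarrow> real (deg n (G n) v) \<le> 2 * real (deg n (Gt n) v)"
    and A_sub: "\<And>n. A n \<subseteq> {..<n}"
    and A_small: "(\<lambda>n. real (card (A n))) \<in> o(\<lambda>n. real n)"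
    and X: "\<And>n. X n \<subseteq> {..<n}"
  shows "\<exists>B \<delta>. (\<forall>n. B n \<subseteq> X n) \<and> (\<lambda>n. real (card (X n - B n))) \<in> o(\<lambda>n. real (card (A n))) \<and>
    \<delta> \<longlonglongrightarrow> 0 \<and> (\<forall>n. \<forall>u\<in>B n. real (card (nbhd n (Gt n) u \<inter> A n)) / real (card (nbhd n (Gt n) u)) \<le> \<delta> n)"
proof -
  define \<kappa> \<Delta> where "\<kappa> n = expansion_defect n (G n)" and "\<Delta> n = real (max_deg n (G n))" for n
  obtain \<eta> where \<eta>: "\<eta> \<longlonglongrightarrow> 0" "\<And>n. 0 \<le> \<eta> n" "\<And>n. 2 * (real (card (A n)) / n) \<le> \<eta> n"
    "\<And>n. \<kappa> n \<le> (\<eta> n)\<^sup>2"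
    using null_sequence_above[OF expansion_defect_tendsto_0[OF exp] smalloD_tendsto[OF A_small]]
    unfolding \<kappa>_def by metis
  define B where "B n = {u \<in> X n. real (card (nbhd n (G n) u \<inter> A n)) \<le> \<eta> n * \<Delta> n}" for n
  define \<delta> where
    "\<delta> n = (if 0 < min_deg n (G n) then 2 * (\<eta> n * \<Delta> n) / real (min_deg n (G n)) else 1)" for n
  have "\<forall>n. B n \<subseteq> X n"
    unfolding B_def by auto
  moreover have "\<delta> \<longlonglongrightarrow> 0"
    unfolding \<delta>_def \<Delta>_def by (rule expander_ratio_bound_tendsto_0[OF exp \<eta>(1)])
  moreover have "real (card (nbhd n (Gt n) u \<inter> A n)) / real (card (nbhd n (Gt n) u)) \<le> \<delta> n"
    if "u \<in> B n" for n u
    using subgraph_nbhd_ratio_le[where E' = "Gt n" and E = "G n" and u = u and n = n and A = "A n"]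
      sub half[of u n] that X[of n] \<eta>(2)[of n]
    unfolding B_def \<delta>_def \<Delta>_def by fastforce
  moreover have "eventually (\<lambda>n. \<bar>real (card (X n - B n))\<bar> \<le> 4 * \<kappa> n * \<bar>real (card (A n))\<bar>) sequentially"
    using eventually_gt_at_top[of 0] expander_min_deg_pos[OF exp]
  proof eventually_elim
    case (elim n)
    then have "0 < max_deg n (G n)"
      using min_deg_le_deg[of 0 n "G n"] deg_le_max_deg[of 0 n "G n"] by linarith
    with elim have "real (card (X n - B n)) \<le> 4 * \<kappa> n * real (card (A n))"
      unfolding \<kappa>_def using exp X[of n] A_sub \<eta>(2-4)[of n] unfolding expander_sequence_def
      by (intro card_rich_vertices_le) (auto simp: B_def \<Delta>_def \<kappa>_def)
    then show ?case
      by simp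
  qed
  then have "(\<lambda>n. real (card (X n - B n))) \<in> o(\<lambda>n. real (card (A n)))"
    using expansion_defect_tendsto_0[OF exp] unfolding \<kappa>_def
    by (intro smalloI_bound[where h = "\<lambda>n. 4 * \<kappa> n"]) (auto simp: \<kappa>_def intro: tendsto_mult_right_zero)
  ultimately show ?thesis
    by blast
qed

theorem lemma2p12:
  fixes G Gt :: "nat \<Rightarrow> nat \<Rightarrow> nat \<Rightarrow> bool"
    and A :: "nat \<Rightarrow> nat set"
    and \<epsilon> :: real
  assumes exp: "expander_sequence G"
    and eps: "\<epsilon> > 0"
    and sub_graph: "\<And>n. is_graph n (Gt n)"
    and sub: "\<And>n u v. Gt n u v \<Longrightarrow> G n u v"
    and keep: "\<And>n v. v < n \<Longrightarrow> real (deg n (Gt n) v) \<ge> (1/2 + \<epsilon>) * real (deg n (G n) v)"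
    and A_sub: "\<And>n. A n \<subseteq> {..<n}"
    and A_small: "(\<lambda>n. real (card (A n))) \<in> o(\<lambda>n. real n)"
  shows
    "(\<exists>B :: nat \<Rightarrow> nat set. \<exists>\<delta> :: nat \<Rightarrow> real.
        (\<forall>n. B n \<subseteq> A n) \<and>
        (\<lambda>n. real (card (A n - B n))) \<in> o(\<lambda>n. real (card (A n))) \<and>
        \<delta> \<longlonglongrightarrow> 0 \<and>
        (\<forall>n. \<forall>u\<in>B n. real (card (nbhd n (Gt n) u \<inter> A n)) / real (card (nbhd n (Gt n) u)) \<le> \<delta> n))
   \<and>
    (\<exists>B :: nat \<Rightarrow> nat set. \<exists>\<delta> :: nat \<Rightarrow> real.
        (\<forall>n. B n \<subseteq> {..<n} - A n) \<and>
        (\<lambda>n. real (card ({..<n} - (A n \<union> B n)))) \<in> o(\<lambda>n. real (card (A n))) \<and>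
        \<delta> \<longlonglongrightarrow> 0 \<and>
        (\<forall>n. \<forall>v\<in>B n. real (card (nbhd n (Gt n) v \<inter> A n)) / real (card (nbhd n (Gt n) v)) \<le> \<delta> n))"
proof -
  have half: "real (deg n (G n) v) \<le> 2 * real (deg n (Gt n) v)" if "v < n" for n v
    using keep[OF that] mult_right_mono[of "1 / 2" "1 / 2 + \<epsilon>" "real (deg n (G n) v)"] eps by linarith
  have diff_diff: "{..<n} - A n - B = {..<n} - (A n \<union> B)" for n B
    by blast
  note sparse = expander_sparse_neighbourhoods[OF exp sub half A_sub A_small]
  show ?thesis
    using sparse[of A] sparse[of "\<lambda>n. {..<n} - A n"] A_sub by (simp only: diff_diff) blast
qed

end
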